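(* Let $X$ be a finite set, $G\le S_X$, $Y=\mathrm{Fol}_r(G)$, $F=N_{S_X}(G)$, and consider the action of $F$ on $Y$ given by $(\lambda_x:x\in X/G)f=(\kappa_x:x\in X/G)$ with $\kappa_x=((\lambda_{yg_y^{-1}})^{g_y})^f$, $y=xf^{-1}$. For $f\in F$, let $\bar f$ be the permutation of $X/G$ induced by $f$ (sending $w\in X/G$ to the representative of the orbit $(wf)G$), $\mathrm{Cyc}(\bar f)$ a complete set of cycle representatives of $\bar f$, and $c(\bar f,x)$ the cycle of $\bar f$ containing $x\in\mathrm{Cyc}(\bar f)$. Then there is a one-to-one correspondence between the set $\mathrm{Fix}(Y,f)=\{\Lambda\in Y:\Lambda f=\Lambda\}$ and the tuples $(c_x:x\in\mathrm{Cyc}(\bar f))$, where each $c_x$ is a short directed cycle of $\Gamma_r(G,f)$ with vertices in $\bigcup_{y\in c(\bar f,x)}C_G(G_y)$. Consequently, the number of orbits of $F$ on $Y$ is $$|Y/F|=\frac{1}{|F|}\sum_{f\in F}|\mathrm{Fix}(Y,f)|=\frac{1}{|F|}\sum_{f\in F}\prod_{x\in\mathrm{Cyc}(\bar f)}\gamma_r(G,f,x),$$ where $\gamma_r(G,f,x)$ is the number of short directed cycles of $\Gamma_r(G,f)$ with vertices in $\bigcup_{y\in c(\bar f,x)}C_G(G_y)$.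
   Context: Permutations act on the right ($xf$ is the image of $x$ under $f$; $fg$ means $f$ first, then $g$); $g^f=f^{-1}gf$. For $G\le S_X$, $xG$ is the orbit of $x$, $G_x$ its stabilizer, $X/G$ a fixed complete set of orbit representatives; $C_G(H)$ is the centralizer and $N_{S_X}(G)$ the normalizer. $\mathrm{Fol}_r(G)=\prod_{x\in X/G}C_G(G_x)$ is the set of rack folders, i.e., tuples $(\lambda_x:x\in X/G)$ with $\lambda_x\in C_G(G_x)$. For every $y\in X$ fix $g_y\in G$ with $xg_y=y$, where $x$ is the representative in $X/G$ of the orbit of $y$. The digraph (possibly with loops) $\Gamma_r(G,f)$, for $f\in N_{S_X}(G)$, has vertex set the formally disjoint union of the sets $C_G(G_x)$, $x\in X/G$; for $x,z\in X/G$, $\kappa_x\in C_G(G_x)$ and $\lambda_z\in C_G(G_z)$, there is a directed edge $\lambda_z\to\kappa_x$ if and only if, with $y=xf^{-1}$, we have $z=yg_y^{-1}$ and $\kappa_x=((\lambda_z)^{g_y})^f$. A directed cycle of $\Gamma_r(G,f)$ is short if it intersects every vertex set $C_G(G_x)$ at most once. *)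

theory Defs
  imports Complex_Main "HOL-Combinatorics.Permutations" "HOL-Library.FuncSet"
begin

text \<open>Permutations of X are functions p with p permutes X
(identity outside X). The paper acts on the right: the image x p of x is
the Isabelle term p x, and the product f g (f first, then g) is g \<circ> f.\<close>

text \<open>Conjugation p^h = h^-1 p h (right action), i.e. x maps to h (p (h^-1 x)).\<close>
definition pconj :: "('a \<Rightarrow> 'a) \<Rightarrow> ('a \<Rightarrow> 'a) \<Rightarrow> ('a \<Rightarrow> 'a)" where
  "pconj p h = h \<circ> p \<circ> inv h"

definition perm_group :: "'a set \<Rightarrow> ('a \<Rightarrow> 'a) set \<Rightarrow> bool" where
  "perm_group X G \<longleftrightarrow> (\<forall>p\<in>G. p permutes X) \<and> id \<in> G
     \<and> (\<forall>p\<in>G. \<forall>q\<in>G. q \<circ> p \<in> G) \<and> (\<forall>p\<in>G. inv p \<in> G)"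

definition orb :: "('a \<Rightarrow> 'a) set \<Rightarrow> 'a \<Rightarrow> 'a set" where
  "orb G x = {p x | p. p \<in> G}"

definition stab :: "('a \<Rightarrow> 'a) set \<Rightarrow> 'a \<Rightarrow> ('a \<Rightarrow> 'a) set" where
  "stab G x = {p \<in> G. p x = x}"

definition centr :: "('a \<Rightarrow> 'a) set \<Rightarrow> ('a \<Rightarrow> 'a) set \<Rightarrow> ('a \<Rightarrow> 'a) set" where
  "centr G H = {c \<in> G. \<forall>h\<in>H. c \<circ> h = h \<circ> c}"

definition normalizer :: "'a set \<Rightarrow> ('a \<Rightarrow> 'a) set \<Rightarrow> ('a \<Rightarrow> 'a) set" where
  "normalizer X G = {f. f permutes X \<and> (\<lambda>h. pconj h f) ` G = G}"

definition orbit_reps :: "'a set \<Rightarrow> ('a \<Rightarrow> 'a) set \<Rightarrow> 'a set \<Rightarrow> bool" where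
  "orbit_reps X G R \<longleftrightarrow> R \<subseteq> X \<and> (\<forall>x\<in>X. \<exists>!r. r \<in> R \<and> r \<in> orb G x)"

definition repr :: "('a \<Rightarrow> 'a) set \<Rightarrow> 'a set \<Rightarrow> 'a \<Rightarrow> 'a" where
  "repr G R y = (THE r. r \<in> R \<and> r \<in> orb G y)"

definition folders :: "('a \<Rightarrow> 'a) set \<Rightarrow> 'a set \<Rightarrow> ('a \<Rightarrow> ('a \<Rightarrow> 'a)) set" where
  "folders G R = (\<Pi>\<^sub>E x\<in>R. centr G (stab G x))"

text \<open>The action of f on folders; gsel y is the fixed g_y.\<close>
definition fol_act :: "'a set \<Rightarrow> ('a \<Rightarrow> ('a \<Rightarrow> 'a)) \<Rightarrow> ('a \<Rightarrow> ('a \<Rightarrow> 'a))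
     \<Rightarrow> ('a \<Rightarrow> 'a) \<Rightarrow> ('a \<Rightarrow> ('a \<Rightarrow> 'a))" where
  "fol_act R gsel \<Lambda> f = (\<lambda>x\<in>R. let y = inv f x in
       pconj (pconj (\<Lambda> (inv (gsel y) y)) (gsel y)) f)"

definition fixset :: "('a \<Rightarrow> 'a) set \<Rightarrow> 'a set \<Rightarrow> ('a \<Rightarrow> ('a \<Rightarrow> 'a))
     \<Rightarrow> ('a \<Rightarrow> 'a) \<Rightarrow> ('a \<Rightarrow> ('a \<Rightarrow> 'a)) set" where
  "fixset G R gsel f = {\<Lambda> \<in> folders G R. fol_act R gsel \<Lambda> f = \<Lambda>}"

definition fol_orbits :: "('a \<Rightarrow> 'a) set \<Rightarrow> 'a set \<Rightarrow> ('a \<Rightarrow> ('a \<Rightarrow> 'a))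
     \<Rightarrow> ('a \<Rightarrow> 'a) set \<Rightarrow> ('a \<Rightarrow> ('a \<Rightarrow> 'a)) set set" where
  "fol_orbits G R gsel F = {{fol_act R gsel \<Lambda> f | f. f \<in> F} | \<Lambda>. \<Lambda> \<in> folders G R}"

definition fbar :: "('a \<Rightarrow> 'a) set \<Rightarrow> 'a set \<Rightarrow> ('a \<Rightarrow> 'a) \<Rightarrow> 'a \<Rightarrow> 'a" where
  "fbar G R f w = repr G R (f w)"

definition fcycle :: "('a \<Rightarrow> 'a) set \<Rightarrow> 'a set \<Rightarrow> ('a \<Rightarrow> 'a) \<Rightarrow> 'a \<Rightarrow> 'a set" where
  "fcycle G R f x = {(fbar G R f ^^ n) x | n. True}"

definition cycle_reps :: "('a \<Rightarrow> 'a) set \<Rightarrow> 'a set \<Rightarrow> ('a \<Rightarrow> 'a) \<Rightarrow> 'a set \<Rightarrow> bool" where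
  "cycle_reps G R f C \<longleftrightarrow> C \<subseteq> R \<and> (\<forall>w\<in>R. \<exists>!c. c \<in> C \<and> w \<in> fcycle G R f c)"

text \<open>The digraph Gamma_r(G,f): vertices are pairs (x, kappa) with x in R and
kappa in C_G(G_x) (formally disjoint union); arcs as a relation.\<close>
definition gverts :: "('a \<Rightarrow> 'a) set \<Rightarrow> 'a set \<Rightarrow> ('a \<times> ('a \<Rightarrow> 'a)) set" where
  "gverts G R = {(x, \<kappa>). x \<in> R \<and> \<kappa> \<in> centr G (stab G x)}"

definition garcs :: "('a \<Rightarrow> 'a) set \<Rightarrow> 'a set \<Rightarrow> ('a \<Rightarrow> ('a \<Rightarrow> 'a)) \<Rightarrow> ('a \<Rightarrow> 'a)
     \<Rightarrow> (('a \<times> ('a \<Rightarrow> 'a)) \<times> ('a \<times> ('a \<Rightarrow> 'a))) set" where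
  "garcs G R gsel f = {((z, l), (x, k)).
      (z, l) \<in> gverts G R \<and> (x, k) \<in> gverts G R \<and>
      (let y = inv f x in z = inv (gsel y) y \<and> k = pconj (pconj l (gsel y)) f)}"

text \<open>A directed cycle of a digraph with arc relation E, represented by its arc set:
the arcs v_0 -> v_1 -> ... -> v_{k-1} -> v_0 for distinct vertices v_i (k >= 1;
k = 1 is a loop).\<close>
definition dcycle :: "('v \<times> 'v) set \<Rightarrow> ('v \<times> 'v) set \<Rightarrow> bool" where
  "dcycle E C \<longleftrightarrow> C \<subseteq> E \<and> (\<exists>vs. vs \<noteq> [] \<and> distinct vs \<and>
      C = {(vs ! i, vs ! ((i + 1) mod length vs)) | i. i < length vs})"

definition cverts :: "('v \<times> 'v) set \<Rightarrow> 'v set" where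
  "cverts C = fst ` C"

definition short :: "(('a \<times> 'b) \<times> ('a \<times> 'b)) set \<Rightarrow> bool" where
  "short C \<longleftrightarrow> (\<forall>u\<in>cverts C. \<forall>v\<in>cverts C. fst u = fst v \<longrightarrow> u = v)"

definition short_cycles_on :: "('a \<Rightarrow> 'a) set \<Rightarrow> 'a set \<Rightarrow> ('a \<Rightarrow> ('a \<Rightarrow> 'a))
     \<Rightarrow> ('a \<Rightarrow> 'a) \<Rightarrow> 'a \<Rightarrow> (('a \<times> ('a \<Rightarrow> 'a)) \<times> ('a \<times> ('a \<Rightarrow> 'a))) set set" where
  "short_cycles_on G R gsel f x = {C. dcycle (garcs G R gsel f) C \<and> short C \<and>
      (\<forall>v\<in>cverts C. fst v \<in> fcycle G R f x)}"

definition gamma_r :: "('a \<Rightarrow> 'a) set \<Rightarrow> 'a set \<Rightarrow> ('a \<Rightarrow> ('a \<Rightarrow> 'a))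
     \<Rightarrow> ('a \<Rightarrow> 'a) \<Rightarrow> 'a \<Rightarrow> nat" where
  "gamma_r G R gsel f x = card (short_cycles_on G R gsel f x)"

end

theory Submission
  imports Defs "HOL-Algebra.Group_Action"
begin

(* Extend a folder G-equivariantly to all of X, lambda_(r g) = lambda_r^g; this is well defined
   because lambda_r centralizes G_r.  In terms of the extension the action is plain conjugation,
   lambda'_y = (lambda_(y f^-1))^f, so N_(S_X)(G) acts on the folders and Burnside's lemma counts
   the orbits.  For a fixed f, a folder is fixed iff for every z in X/G the pair
   (z, lambda_z) -> (z fbar, lambda_(z fbar)) is an arc of Gamma_r(G,f).  Along one cycle of fbar these arcs form a short
   directed cycle; conversely a short cycle inside the blocks of an fbar-cycle meets each of these
   blocks exactly once, because arcs go from the block of z to the block of z fbar.  Choosing the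
   values cycle by cycle gives the bijection, and hence the product formula. *)

(* HOL-Algebra reuses the names inv and normalizer. *)
unbundle no m_inv_syntax
hide_const (open) Group_Action.normalizer
hide_fact (open) Group_Action.normalizer_def

section \<open>Conjugation in permutation groups\<close>

lemma pconj_apply: "pconj p h x = h (p (inv h x))"
  by (simp add: pconj_def)

lemma pconj_id [simp]: "pconj p id = p"
  by (simp add: pconj_def)

lemma pconj_pconj: "bij a \<Longrightarrow> bij b \<Longrightarrow> pconj (pconj p a) b = pconj p (b \<circ> a)"
  by (simp add: pconj_def o_inv_distrib o_assoc)

lemma perm_groupD:
  assumes "perm_group X G"
  shows perm_group_permutes: "g \<in> G \<Longrightarrow> g permutes X"
    and perm_group_id: "id \<in> G"
    and perm_group_comp: "p \<in> G \<Longrightarrow> q \<in> G \<Longrightarrow> q \<circ> p \<in> G"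
    and perm_group_inv: "p \<in> G \<Longrightarrow> inv p \<in> G"
  using assms by (auto simp: perm_group_def)

lemma normalizer_permutes: "f \<in> normalizer X G \<Longrightarrow> f permutes X"
  by (simp add: normalizer_def)

lemma normalizer_pconj: "f \<in> normalizer X G \<Longrightarrow> g \<in> G \<Longrightarrow> pconj g f \<in> G"
  unfolding normalizer_def by blast

lemma perm_group_normalizer: "perm_group X (normalizer X G)"
  unfolding perm_group_def
proof (intro conjI ballI)
  fix f g assume f: "f \<in> normalizer X G" and g: "g \<in> normalizer X G"
  have fX: "f permutes X" and gX: "g permutes X"
    using f g by (simp_all add: normalizer_permutes)
  then have bij: "bij f" "bij g" "bij (inv f)"
    by (auto intro: permutes_bij permutes_inv)
  have "(\<lambda>h. pconj h (g \<circ> f)) ` G = (\<lambda>h. pconj h g) ` (\<lambda>h. pconj h f) ` G"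
    by (simp add: image_image pconj_pconj bij)
  then show "g \<circ> f \<in> normalizer X G"
    using f g permutes_compose[OF fX gX] by (simp add: normalizer_def)
  have "(\<lambda>h. pconj h (inv f)) ` G = (\<lambda>h. pconj h (inv f)) ` (\<lambda>h. pconj h f) ` G"
    using f by (simp add: normalizer_def)
  also have "\<dots> = G"
    by (simp add: image_image pconj_pconj bij permutes_inv_o(2)[OF fX])
  finally show "inv f \<in> normalizer X G"
    using permutes_inv[OF fX] by (simp add: normalizer_def)
qed (auto simp: normalizer_def permutes_id)

lemma perm_group_subset_normalizer:
  assumes G: "perm_group X G" shows "G \<subseteq> normalizer X G"
proof
  fix g assume g: "g \<in> G"
  have bij: "bij g" "bij (inv g)"
    using perm_group_permutes[OF G g] by (auto intro: permutes_bij permutes_inv)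
  have "pconj h g \<in> G" if "h \<in> G" for h
    using that g by (simp add: pconj_def perm_groupD[OF G])
  moreover have "h = pconj (pconj h (inv g)) g" for h
    by (simp add: pconj_pconj bij permutes_inv_o(1)[OF perm_group_permutes[OF G g]])
  moreover have "pconj h (inv g) \<in> G" if "h \<in> G" for h
    using that g by (simp add: pconj_def perm_groupD[OF G] permutes_inv_inv[OF perm_group_permutes[OF G g]])
  ultimately have "(\<lambda>h. pconj h g) ` G = G"
    by blast
  then show "g \<in> normalizer X G"
    using perm_group_permutes[OF G g] by (simp add: normalizer_def)
qed

lemma orb_refl:
  assumes "perm_group X G" shows "x \<in> orb G x"
proof -
  have "x = id x" by simp
  then show ?thesis
    using perm_group_id[OF assms] unfolding orb_def by blast
qed

lemma orb_sym:
  assumes G: "perm_group X G" and "y \<in> orb G x"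
  shows "x \<in> orb G y"
proof -
  obtain g where g: "g \<in> G" "y = g x"
    using assms(2) by (auto simp: orb_def)
  then have "x = inv g y"
    using permutes_inverses(2)[OF perm_group_permutes[OF G g(1)]] by simp
  then show ?thesis
    using perm_group_inv[OF G g(1)] by (auto simp: orb_def)
qed

lemma orb_trans:
  assumes G: "perm_group X G" and "y \<in> orb G x" and "z \<in> orb G y"
  shows "z \<in> orb G x"
proof -
  obtain g h where "g \<in> G" "y = g x" "h \<in> G" "z = h y"
    using assms(2,3) by (auto simp: orb_def)
  then have "h \<circ> g \<in> G" "z = (h \<circ> g) x"
    using perm_group_comp[OF G] by simp_all
  then show ?thesis
    unfolding orb_def by blast
qed

lemma normalizer_orb:
  assumes f: "f \<in> normalizer X G" and "y \<in> orb G x"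
  shows "f y \<in> orb G (f x)"
proof -
  obtain g where g: "g \<in> G" "y = g x"
    using assms(2) by (auto simp: orb_def)
  have "f y = pconj g f (f x)"
    using g(2) by (simp add: pconj_apply permutes_inverses(2)[OF normalizer_permutes[OF f]])
  then show ?thesis
    using normalizer_pconj[OF f g(1)] by (auto simp: orb_def)
qed

lemma pconj_centr_stab_eq:
  assumes G: "perm_group X G" and c: "c \<in> centr G (stab G r)"
    and g: "g \<in> G" and h: "h \<in> G" and gh: "g r = h r"
  shows "pconj c g = pconj c h"
proof -
  define s where "s = inv h \<circ> g"
  have h_perm: "h permutes X"
    using perm_group_permutes[OF G h] .
  have s: "s \<in> G" "s r = r"
    using g h gh permutes_inverses(2)[OF h_perm] by (simp_all add: s_def perm_groupD[OF G])
  have bij: "bij s" "bij h"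
    using perm_group_permutes[OF G] s(1) h by (auto intro: permutes_bij)
  have "c \<circ> s = s \<circ> c"
    using c s by (auto simp: centr_def stab_def)
  then have "pconj c s = c"
    using bij(1) by (simp add: pconj_def fun_eq_iff) (metis bij_inv_eq_iff)
  moreover have "g = h \<circ> s"
    using permutes_inv_o(1)[OF h_perm] by (simp add: s_def o_assoc)
  ultimately show ?thesis
    using pconj_pconj[OF bij, of c] by simp
qed

lemma pconj_centr_stab:
  assumes f: "f \<in> normalizer X G" and c: "c \<in> centr G (stab G y)"
  shows "pconj c f \<in> centr G (stab G (f y))"
proof -
  have f_perm: "f permutes X"
    using f by (simp add: normalizer_def)
  have "pconj c f \<circ> s = s \<circ> pconj c f" if s: "s \<in> G" "s (f y) = f y" for s
  proof -
    define s' where "s' = pconj s (inv f)"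
    have s'_apply: "s' u = inv f (s (f u))" for u
      by (simp add: s'_def pconj_apply permutes_inv_inv[OF f_perm])
    have "s' \<in> G"
      using normalizer_pconj[OF perm_groupD(4)[OF perm_group_normalizer f] s(1)] by (simp add: s'_def)
    moreover have "s' y = y"
      using s(2) by (simp add: s'_apply permutes_inverses(2)[OF f_perm])
    ultimately have "c (s' u) = s' (c u)" for u
      using c by (auto simp: centr_def stab_def fun_eq_iff)
    then show ?thesis
      by (simp add: fun_eq_iff pconj_apply s'_apply permutes_inverses[OF f_perm])
           (metis permutes_inverses(1)[OF f_perm])
  qed
  moreover have "pconj c f \<in> G"
    using normalizer_pconj[OF f] c by (simp add: centr_def)
  ultimately show ?thesis
    by (auto simp: centr_def stab_def)
qed

section \<open>Group actions of permutation groups\<close>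

definition perm_monoid :: "('a \<Rightarrow> 'a) set \<Rightarrow> ('a \<Rightarrow> 'a) monoid" where
  "perm_monoid H = \<lparr>carrier = H, mult = (\<circ>), one = id\<rparr>"

lemma group_perm_monoid:
  assumes "perm_group X H" shows "group (perm_monoid H)"
proof (rule groupI)
  fix f assume "f \<in> carrier (perm_monoid H)"
  then have "inv f \<in> H" "inv f \<circ> f = id"
    using assms permutes_inv_o(2)[OF perm_group_permutes]
    by (auto simp: perm_monoid_def perm_group_inv)
  then show "\<exists>g\<in>carrier (perm_monoid H). g \<otimes>\<^bsub>perm_monoid H\<^esub> f = \<one>\<^bsub>perm_monoid H\<^esub>"
    by (auto simp: perm_monoid_def)
qed (simp_all add: perm_monoid_def perm_groupD[OF assms] comp_assoc)

lemma group_actionI: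
  assumes "group \<Gamma>"
    and closed: "\<And>f a. f \<in> carrier \<Gamma> \<Longrightarrow> a \<in> A \<Longrightarrow> act f a \<in> A"
    and one: "\<And>a. a \<in> A \<Longrightarrow> act \<one>\<^bsub>\<Gamma>\<^esub> a = a"
    and mult: "\<And>f g a. f \<in> carrier \<Gamma> \<Longrightarrow> g \<in> carrier \<Gamma> \<Longrightarrow> a \<in> A \<Longrightarrow>
                 act f (act g a) = act (f \<otimes>\<^bsub>\<Gamma>\<^esub> g) a"
  shows "group_action \<Gamma> A (\<lambda>f. \<lambda>a\<in>A. act f a)"
proof -
  interpret \<Gamma>: group \<Gamma> by fact
  have Bij: "(\<lambda>a\<in>A. act f a) \<in> Bij A" if f: "f \<in> carrier \<Gamma>" for f
  proof -
    have "bij_betw (act f) A A"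
    proof (rule bij_betw_byWitness[where f' = "act (m_inv \<Gamma> f)"])
      show "\<forall>a\<in>A. act (m_inv \<Gamma> f) (act f a) = a" "\<forall>a\<in>A. act f (act (m_inv \<Gamma> f) a) = a"
        using f by (simp_all add: mult one)
    qed (use f closed in auto)
    then show ?thesis
      by (simp add: Bij_def)
  qed
  have hom: "(\<lambda>a\<in>A. act (f \<otimes>\<^bsub>\<Gamma>\<^esub> g) a) = (\<lambda>a\<in>A. act f a) \<otimes>\<^bsub>BijGroup A\<^esub> (\<lambda>a\<in>A. act g a)"
    if f: "f \<in> carrier \<Gamma>" and g: "g \<in> carrier \<Gamma>" for f g
  proof -
    have "(\<lambda>a\<in>A. act f a) \<otimes>\<^bsub>BijGroup A\<^esub> (\<lambda>a\<in>A. act g a)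
        = compose A (\<lambda>a\<in>A. act f a) (\<lambda>a\<in>A. act g a)"
      using Bij f g by (simp add: BijGroup_def)
    also have "\<dots> = (\<lambda>a\<in>A. act (f \<otimes>\<^bsub>\<Gamma>\<^esub> g) a)"
      unfolding compose_def by (intro restrict_ext) (simp add: closed[OF g] mult[OF f g])
    finally show ?thesis by simp
  qed
  have "(\<lambda>f. \<lambda>a\<in>A. act f a) \<in> hom \<Gamma> (BijGroup A)"
  proof (rule homI)
    show "(\<lambda>a\<in>A. act f a) \<in> carrier (BijGroup A)" if "f \<in> carrier \<Gamma>" for f
      using Bij[OF that] by (simp add: BijGroup_def)
  qed (rule hom)
  then show ?thesis
    unfolding group_action_def group_hom_def group_hom_axioms_def
    using \<open>group \<Gamma>\<close> group_BijGroup by blast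
qed

section \<open>Sections over a permutation and short cycles\<close>

lemma dcycle_funpow_orbit:
  assumes period: "(g ^^ n) v = v" "0 < n"
    and arcs: "\<And>k. ((g ^^ k) v, (g ^^ Suc k) v) \<in> E"
  shows "dcycle E {((g ^^ k) v, (g ^^ Suc k) v) | k. True}"
proof -
  obtain p where p: "0 < p" "(g ^^ p) v = v" and least: "\<And>m. 0 < m \<Longrightarrow> m < p \<Longrightarrow> (g ^^ m) v \<noteq> v"
    using exists_least_iff[of "\<lambda>n. 0 < n \<and> (g ^^ n) v = v"] period by (metis not_less0)
  have mod_p: "(g ^^ (k mod p)) v = (g ^^ k) v" for k
    by (rule funpow_mod_eq[OF p(2)])
  define vs where "vs = map (\<lambda>k. (g ^^ k) v) [0..<p]"
  have "distinct vs"
    unfolding vs_def distinct_map using inj_on_funpow_least[OF p(2) least] by simp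
  moreover have "vs \<noteq> []"
    using p(1) by (simp add: vs_def)
  moreover have "{((g ^^ k) v, (g ^^ Suc k) v) | k. True}
      = {(vs ! i, vs ! ((i + 1) mod length vs)) | i. i < length vs}"
  proof (intro equalityI subsetI)
    fix e assume "e \<in> {((g ^^ k) v, (g ^^ Suc k) v) | k. True}"
    then obtain k where "e = ((g ^^ k) v, (g ^^ Suc k) v)" by blast
    moreover have "(g ^^ ((k mod p + 1) mod p)) v = (g ^^ Suc k) v"
      by (simp add: mod_p)
    ultimately have "e = (vs ! (k mod p), vs ! ((k mod p + 1) mod length vs))"
      using p(1) by (simp add: vs_def mod_p)
    moreover have "k mod p < length vs"
      using p(1) by (simp add: vs_def)
    ultimately show "e \<in> {(vs ! i, vs ! ((i + 1) mod length vs)) | i. i < length vs}"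
      by blast
  next
    fix e assume "e \<in> {(vs ! i, vs ! ((i + 1) mod length vs)) | i. i < length vs}"
    then obtain i where "i < p" "e = (vs ! i, vs ! ((i + 1) mod p))"
      by (auto simp: vs_def)
    then have "e = ((g ^^ i) v, (g ^^ Suc i) v)"
      using p(1) by (simp add: vs_def mod_p)
    then show "e \<in> {((g ^^ k) v, (g ^^ Suc k) v) | k. True}" by blast
  qed
  ultimately show ?thesis
    unfolding dcycle_def using arcs by blast
qed

lemma dcycle_nonempty: "dcycle E D \<Longrightarrow> D \<noteq> {}"
  by (force simp: dcycle_def)

lemma dcycle_target_in_cverts:
  assumes "dcycle E D" and "(u, v) \<in> D"
  shows "v \<in> cverts D"
proof -
  obtain vs where vs: "vs \<noteq> []" "D = {(vs ! i, vs ! ((i + 1) mod length vs)) | i. i < length vs}"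
    using assms(1) by (auto simp: dcycle_def)
  with assms(2) obtain i where "v = vs ! ((i + 1) mod length vs)" by blast
  moreover have "(vs ! j, vs ! ((j + 1) mod length vs)) \<in> D" if "j < length vs" for j
    using vs(2) that by blast
  ultimately have "(v, vs ! (((i + 1) mod length vs + 1) mod length vs)) \<in> D"
    using vs(1) by simp
  then show ?thesis
    unfolding cverts_def by (metis fst_conv image_eqI)
qed

(* Gamma_r(G,f) in the abstract (R = X/G, sigma = fbar, V z = C_G(G_z)): one arc from (z, l) to
   (sigma z, E z l) for every l in V z whose image lies in V (sigma z). *)
locale transport =
  fixes R :: "'a set" and \<sigma> :: "'a \<Rightarrow> 'a" and V :: "'a \<Rightarrow> 'b set" and E :: "'a \<Rightarrow> 'b \<Rightarrow> 'b"
  assumes finite_R: "finite R" and bij_\<sigma>: "bij_betw \<sigma> R R"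
begin

definition base_cycle :: "'a \<Rightarrow> 'a set" where
  "base_cycle c = {(\<sigma> ^^ n) c | n. True}"

definition arcs :: "(('a \<times> 'b) \<times> ('a \<times> 'b)) set" where
  "arcs = {((z, l), (x, k)). z \<in> R \<and> l \<in> V z \<and> x \<in> R \<and> k \<in> V x \<and> x = \<sigma> z \<and> k = E z l}"

definition invariant_sections :: "('a \<Rightarrow> 'b) set" where
  "invariant_sections = {L \<in> (\<Pi>\<^sub>E z\<in>R. V z). \<forall>z\<in>R. L (\<sigma> z) = E z (L z)}"

definition short_cycles_over :: "'a \<Rightarrow> (('a \<times> 'b) \<times> ('a \<times> 'b)) set set" where
  "short_cycles_over c = {D. dcycle arcs D \<and> short D \<and> (\<forall>v\<in>cverts D. fst v \<in> base_cycle c)}"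

definition section_cycle :: "('a \<Rightarrow> 'b) \<Rightarrow> 'a \<Rightarrow> (('a \<times> 'b) \<times> ('a \<times> 'b)) set" where
  "section_cycle L c = {((w, L w), (\<sigma> w, L (\<sigma> w))) | w. w \<in> base_cycle c}"

definition label :: "(('a \<times> 'b) \<times> ('a \<times> 'b)) set \<Rightarrow> 'a \<Rightarrow> 'b" where
  "label D w = (THE l. (w, l) \<in> cverts D)"

lemma funpow_in_R: "c \<in> R \<Longrightarrow> (\<sigma> ^^ n) c \<in> R"
  using bij_\<sigma> by (induction n) (auto simp: bij_betw_def)

lemma base_cycle_subset: "c \<in> R \<Longrightarrow> base_cycle c \<subseteq> R"
  by (auto simp: base_cycle_def funpow_in_R)

lemma base_cycle_step:
  assumes "w \<in> base_cycle c" shows "\<sigma> w \<in> base_cycle c"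
proof -
  obtain n where "w = (\<sigma> ^^ n) c"
    using assms by (auto simp: base_cycle_def)
  then have "\<sigma> w = (\<sigma> ^^ Suc n) c" by simp
  then show ?thesis
    unfolding base_cycle_def by blast
qed

lemma base_cycle_trans:
  assumes "v \<in> base_cycle w" and "w \<in> base_cycle c"
  shows "v \<in> base_cycle c"
proof -
  obtain m n where "v = (\<sigma> ^^ m) w" "w = (\<sigma> ^^ n) c"
    using assms by (auto simp: base_cycle_def)
  then have "v = (\<sigma> ^^ (m + n)) c"
    by (simp add: funpow_add)
  then show ?thesis
    unfolding base_cycle_def by blast
qed

lemma periodic:
  assumes "c \<in> R" obtains n where "0 < n" "(\<sigma> ^^ n) c = c"
proof -
  define s where "s w = (if w \<in> R then \<sigma> w else w)" for w
  have "bij_betw s R R"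
    using bij_betw_cong[of R s \<sigma> R] bij_\<sigma> by (simp add: s_def)
  then have "s permutes R"
    by (rule bij_imp_permutes) (simp add: s_def)
  then have "permutation s"
    using finite_R by (auto simp: permutation_permutes)
  then obtain n where "0 < n" "(s ^^ n) c = c"
    by (rule permutation_self)
  moreover have "(s ^^ k) c = (\<sigma> ^^ k) c" for k
    using assms by (induction k) (simp_all add: s_def funpow_in_R)
  ultimately show ?thesis
    using that by simp
qed

lemma base_cycle_sym:
  assumes c: "c \<in> R" and w: "w \<in> base_cycle c"
  shows "c \<in> base_cycle w"
proof -
  obtain p where p: "0 < p" "(\<sigma> ^^ p) c = c"
    using periodic[OF c] .
  obtain j where j: "w = (\<sigma> ^^ j) c"
    using w by (auto simp: base_cycle_def)
  have "(\<sigma> ^^ ((p - 1) * j)) w = (\<sigma> ^^ ((p - 1) * j + j)) c"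
    by (simp add: j funpow_add)
  also have "(p - 1) * j + j = p * j"
    using p(1) by (cases p) simp_all
  also have "(\<sigma> ^^ (p * j)) c = c"
    using funpow_mod_eq[OF p(2), of "p * j"] by simp
  finally show ?thesis
    unfolding base_cycle_def by blast
qed

lemma cverts_section_cycle: "cverts (section_cycle L c) = {(w, L w) | w. w \<in> base_cycle c}"
  unfolding cverts_def section_cycle_def by force

lemma label_section_cycle: "w \<in> base_cycle c \<Longrightarrow> label (section_cycle L c) w = L w"
  unfolding label_def cverts_section_cycle by blast

lemma section_cycle_cong:
  assumes "\<And>w. w \<in> base_cycle c \<Longrightarrow> L w = L' w"
  shows "section_cycle L c = section_cycle L' c"
  unfolding section_cycle_def by (auto simp: assms base_cycle_step)

lemma section_arc:
  assumes L: "L \<in> invariant_sections" and z: "z \<in> R"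
  shows "((z, L z), (\<sigma> z, L (\<sigma> z))) \<in> arcs"
proof -
  have \<sigma>z: "\<sigma> z \<in> R"
    using bij_betw_apply[OF bij_\<sigma> z] .
  have L_Pi: "L \<in> (\<Pi>\<^sub>E z\<in>R. V z)" and "L (\<sigma> z) = E z (L z)"
    using L z by (auto simp: invariant_sections_def)
  moreover have "L z \<in> V z" "L (\<sigma> z) \<in> V (\<sigma> z)"
    using PiE_mem[OF L_Pi z] PiE_mem[OF L_Pi \<sigma>z] .
  ultimately show ?thesis
    using z \<sigma>z by (simp add: arcs_def)
qed

lemma section_cycle_in_short_cycles_over:
  assumes L: "L \<in> invariant_sections" and c: "c \<in> R"
  shows "section_cycle L c \<in> short_cycles_over c"
proof -
  define g :: "'a \<times> 'b \<Rightarrow> 'a \<times> 'b" where "g = (\<lambda>(w, _). (\<sigma> w, L (\<sigma> w)))"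
  have g_funpow: "(g ^^ k) (c, L c) = ((\<sigma> ^^ k) c, L ((\<sigma> ^^ k) c))" for k
    by (induction k) (simp_all add: g_def)
  obtain n where n: "0 < n" "(\<sigma> ^^ n) c = c"
    using periodic[OF c] .
  have "dcycle arcs {((g ^^ k) (c, L c), (g ^^ Suc k) (c, L c)) | k. True}"
  proof (rule dcycle_funpow_orbit[where n = n])
    show "(g ^^ n) (c, L c) = (c, L c)" "0 < n"
      using n by (simp_all add: g_funpow)
    show "((g ^^ k) (c, L c), (g ^^ Suc k) (c, L c)) \<in> arcs" for k
      unfolding g_funpow unfolding funpow.simps(2) o_apply
      using section_arc[OF L funpow_in_R[OF c]] .
  qed
  also have "{((g ^^ k) (c, L c), (g ^^ Suc k) (c, L c)) | k. True} = section_cycle L c"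
    unfolding section_cycle_def base_cycle_def g_funpow by auto
  finally show ?thesis
    by (auto simp: short_cycles_over_def short_def cverts_section_cycle)
qed

context
  fixes D c assumes D: "D \<in> short_cycles_over c"
begin

lemma short_cycle_arcD:
  assumes "((z, l), u) \<in> D"
  shows "z \<in> R" "l \<in> V z" "u = (\<sigma> z, E z l)"
  using assms D by (auto simp: short_cycles_over_def dcycle_def arcs_def)

lemma short_cycle_label: "(w, l) \<in> cverts D \<Longrightarrow> label D w = l"
  using D unfolding label_def short_cycles_over_def short_def by fastforce

lemma short_cycle_step: "(z, l) \<in> cverts D \<Longrightarrow> (\<sigma> z, E z l) \<in> cverts D"
  using D short_cycle_arcD dcycle_target_in_cverts
  unfolding cverts_def short_cycles_over_def by fastforce

lemma short_cycle_covers: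
  assumes c: "c \<in> R" and w: "w \<in> base_cycle c"
  shows "(w, label D w) \<in> cverts D"
proof -
  have "D \<noteq> {}"
    using D dcycle_nonempty by (auto simp: short_cycles_over_def)
  then obtain w0 l0 u where "((w0, l0), u) \<in> D"
    by (metis all_not_in_conv prod.collapse)
  then have v0: "(w0, l0) \<in> cverts D"
    by (force simp: cverts_def)
  have "\<exists>l. ((\<sigma> ^^ n) w0, l) \<in> cverts D" for n
  proof (induction n)
    case (Suc n)
    then show ?case using short_cycle_step by auto
  qed (use v0 in auto)
  moreover have "w0 \<in> base_cycle c"
    using D v0 by (auto simp: short_cycles_over_def)
  then have "w \<in> base_cycle w0"
    using base_cycle_trans base_cycle_sym[OF c] w by blast
  ultimately show ?thesis
    using short_cycle_label by (auto simp: base_cycle_def)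
qed

lemma short_cycle_label_step:
  assumes "c \<in> R" and "w \<in> base_cycle c"
  shows "label D w \<in> V w" and "label D (\<sigma> w) = E w (label D w)"
proof -
  obtain u where "((w, label D w), u) \<in> D"
    using short_cycle_covers[OF assms] by (auto simp: cverts_def)
  then show "label D w \<in> V w"
    using short_cycle_arcD by blast
  show "label D (\<sigma> w) = E w (label D w)"
    using short_cycle_covers[OF assms] by (intro short_cycle_label short_cycle_step)
qed

lemma short_cycle_eq_section_cycle:
  assumes c: "c \<in> R"
  shows "D = section_cycle (label D) c"
proof (intro equalityI subsetI)
  fix e assume e: "e \<in> D"
  then obtain z l u where e_def: "e = ((z, l), u)"
    by (metis prod.collapse)
  have "(z, l) \<in> cverts D"
    using e by (force simp: cverts_def e_def)
  moreover have "z \<in> base_cycle c"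
    using D calculation by (auto simp: short_cycles_over_def)
  ultimately show "e \<in> section_cycle (label D) c"
    using short_cycle_arcD e short_cycle_label short_cycle_label_step[OF c]
    by (auto simp: section_cycle_def e_def)
next
  fix e assume "e \<in> section_cycle (label D) c"
  then obtain w where w: "w \<in> base_cycle c" and e: "e = ((w, label D w), (\<sigma> w, label D (\<sigma> w)))"
    by (auto simp: section_cycle_def)
  obtain u where "((w, label D w), u) \<in> D"
    using short_cycle_covers[OF c w] by (auto simp: cverts_def)
  then show "e \<in> D"
    using short_cycle_arcD short_cycle_label_step[OF c w] e by auto
qed

end

context
  fixes C assumes C: "C \<subseteq> R" and reps: "\<forall>w\<in>R. \<exists>!c. c \<in> C \<and> w \<in> base_cycle c"
begin

definition cycle_rep :: "'a \<Rightarrow> 'a" where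
  "cycle_rep w = (THE c. c \<in> C \<and> w \<in> base_cycle c)"

lemma cycle_rep: "w \<in> R \<Longrightarrow> cycle_rep w \<in> C" "w \<in> R \<Longrightarrow> w \<in> base_cycle (cycle_rep w)"
  using theI'[OF reps[rule_format]] by (simp_all add: cycle_rep_def)

lemma cycle_rep_eq: "c \<in> C \<Longrightarrow> w \<in> base_cycle c \<Longrightarrow> cycle_rep w = c"
  using C base_cycle_subset reps unfolding cycle_rep_def by (blast intro: the1_equality)

definition glue :: "('a \<Rightarrow> (('a \<times> 'b) \<times> ('a \<times> 'b)) set) \<Rightarrow> 'a \<Rightarrow> 'b" where
  "glue T = (\<lambda>w\<in>R. label (T (cycle_rep w)) w)"

lemma glue_section_cycle:
  assumes "L \<in> invariant_sections"
  shows "glue (\<lambda>c\<in>C. section_cycle L c) = L"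
proof -
  have "L \<in> extensional R"
    using assms by (simp add: invariant_sections_def PiE_iff)
  then show ?thesis
    unfolding glue_def
    by (rule extensionalityI[OF restrict_extensional]) (simp add: cycle_rep label_section_cycle)
qed

lemma section_cycle_glue:
  assumes T: "T \<in> (\<Pi>\<^sub>E c\<in>C. short_cycles_over c)" and c: "c \<in> C"
  shows "section_cycle (glue T) c = T c"
proof -
  have "section_cycle (glue T) c = section_cycle (label (T c)) c"
    using c C base_cycle_subset cycle_rep_eq by (intro section_cycle_cong) (auto simp: glue_def)
  also have "\<dots> = T c"
    using c T C by (intro short_cycle_eq_section_cycle[symmetric]) auto
  finally show ?thesis .
qed

lemma glue_in_invariant_sections:
  assumes T: "T \<in> (\<Pi>\<^sub>E c\<in>C. short_cycles_over c)"
  shows "glue T \<in> invariant_sections"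
proof -
  have "glue T w \<in> V w \<and> glue T (\<sigma> w) = E w (glue T w)" if w: "w \<in> R" for w
  proof -
    have cw: "cycle_rep w \<in> C" "w \<in> base_cycle (cycle_rep w)"
      using cycle_rep[OF w] .
    then have "T (cycle_rep w) \<in> short_cycles_over (cycle_rep w)" and "cycle_rep w \<in> R"
      using T C by auto
    note step = short_cycle_label_step[OF this cw(2)]
    have "\<sigma> w \<in> R" "cycle_rep (\<sigma> w) = cycle_rep w"
      using bij_betw_apply[OF bij_\<sigma> w] base_cycle_step cw by (auto intro: cycle_rep_eq)
    then show ?thesis
      using step w by (simp add: glue_def)
  qed
  then show ?thesis
    by (simp add: invariant_sections_def glue_def)
qed

theorem bij_betw_invariant_sections:
  "bij_betw (\<lambda>L. \<lambda>c\<in>C. section_cycle L c) invariant_sections (\<Pi>\<^sub>E c\<in>C. short_cycles_over c)"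
proof (rule bij_betw_byWitness[where f' = glue])
  show "(\<lambda>L. \<lambda>c\<in>C. section_cycle L c) ` invariant_sections \<subseteq> (\<Pi>\<^sub>E c\<in>C. short_cycles_over c)"
    using C section_cycle_in_short_cycles_over by auto
  show "\<forall>T\<in>\<Pi>\<^sub>E c\<in>C. short_cycles_over c. (\<lambda>c\<in>C. section_cycle (glue T) c) = T"
    using section_cycle_glue by (auto intro!: extensionalityI[OF restrict_extensional] simp: PiE_iff)
qed (use glue_section_cycle glue_in_invariant_sections in auto)

end

end

section \<open>The action of the normalizer on rack folders\<close>

locale rack_folders =
  fixes X :: "'a set" and G :: "('a \<Rightarrow> 'a) set" and R :: "'a set" and gsel :: "'a \<Rightarrow> 'a \<Rightarrow> 'a"
  assumes finite_X: "finite X"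
    and perm_group_G: "perm_group X G"
    and orbit_reps_R: "orbit_reps X G R"
    and gsel: "\<forall>y\<in>X. gsel y \<in> G \<and> gsel y (repr G R y) = y"
begin

abbreviation F where "F \<equiv> normalizer X G"

lemma R_subset_X: "R \<subseteq> X"
  using orbit_reps_R by (simp add: orbit_reps_def)

lemma repr_in_R: "y \<in> X \<Longrightarrow> repr G R y \<in> R"
  and repr_in_orb: "y \<in> X \<Longrightarrow> repr G R y \<in> orb G y"
  using theI'[of "\<lambda>r. r \<in> R \<and> r \<in> orb G y"] orbit_reps_R
  by (auto simp: repr_def orbit_reps_def)

lemma repr_eqI: "y \<in> X \<Longrightarrow> r \<in> R \<Longrightarrow> r \<in> orb G y \<Longrightarrow> repr G R y = r"
  using the1_equality[of "\<lambda>r. r \<in> R \<and> r \<in> orb G y"] orbit_reps_R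
  by (auto simp: repr_def orbit_reps_def)

lemma repr_R: "r \<in> R \<Longrightarrow> repr G R r = r"
  using R_subset_X orb_refl[OF perm_group_G] by (auto intro: repr_eqI)

lemma repr_perm_group:
  assumes y: "y \<in> X" and g: "g \<in> G" shows "repr G R (g y) = repr G R y"
proof -
  have gy: "g y \<in> X"
    using y perm_group_permutes[OF perm_group_G g] by (simp add: permutes_in_image)
  have "y \<in> orb G (g y)"
    by (rule orb_sym[OF perm_group_G]) (use g in \<open>auto simp: orb_def\<close>)
  then have "repr G R y \<in> orb G (g y)"
    using orb_trans[OF perm_group_G _ repr_in_orb[OF y]] by blast
  then show ?thesis
    by (rule repr_eqI[OF gy repr_in_R[OF y]])
qed

lemma gsel_in_G: "y \<in> X \<Longrightarrow> gsel y \<in> G"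
  and gsel_repr: "y \<in> X \<Longrightarrow> gsel y (repr G R y) = y"
  using gsel by auto

lemma inv_gsel: "y \<in> X \<Longrightarrow> inv (gsel y) y = repr G R y"
  using permutes_inverses(2)[OF perm_group_permutes[OF perm_group_G gsel_in_G]] gsel_repr
  by metis

lemma normalizer_in_X: "f \<in> F \<Longrightarrow> x \<in> X \<Longrightarrow> f x \<in> X"
  and normalizer_inv_in_X: "f \<in> F \<Longrightarrow> x \<in> X \<Longrightarrow> inv f x \<in> X"
  by (auto simp: normalizer_def permutes_in_image permutes_inv)

lemma repr_inv_eq_iff:
  assumes f: "f \<in> F" and z: "z \<in> R" and x: "x \<in> R"
  shows "repr G R (inv f x) = z \<longleftrightarrow> fbar G R f z = x"
proof -
  have X: "z \<in> X" "x \<in> X" "inv f x \<in> X" "f z \<in> X"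
    using z x R_subset_X normalizer_in_X[OF f] normalizer_inv_in_X[OF f] by auto
  have f_inv: "f (inv f x) = x" "inv f (f z) = z"
    by (simp_all add: permutes_inverses[OF normalizer_permutes[OF f]])
  have "repr G R (inv f x) = z \<longleftrightarrow> z \<in> orb G (inv f x)"
    using X z repr_eqI repr_in_orb by blast
  also have "\<dots> \<longleftrightarrow> f z \<in> orb G x"
    using normalizer_orb[OF f, of z "inv f x"] normalizer_orb[OF perm_groupD(4)[OF perm_group_normalizer f], of "f z" x]
    by (auto simp: f_inv)
  also have "\<dots> \<longleftrightarrow> x \<in> orb G (f z)"
    using orb_sym[OF perm_group_G] by blast
  also have "\<dots> \<longleftrightarrow> fbar G R f z = x"
    using X x repr_eqI repr_in_orb by (auto simp: fbar_def)
  finally show ?thesis .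
qed

definition folder_ext :: "('a \<Rightarrow> 'a \<Rightarrow> 'a) \<Rightarrow> 'a \<Rightarrow> 'a \<Rightarrow> 'a" where
  "folder_ext L y = pconj (L (repr G R y)) (gsel y)"

lemma folder_centr: "L \<in> folders G R \<Longrightarrow> r \<in> R \<Longrightarrow> L r \<in> centr G (stab G r)"
  by (auto simp: folders_def)

lemma folder_ext_eq:
  assumes L: "L \<in> folders G R" and y: "y \<in> X" and g: "g \<in> G" and gy: "g (repr G R y) = y"
  shows "folder_ext L y = pconj (L (repr G R y)) g"
  unfolding folder_ext_def using gy gsel_repr[OF y]
  by (intro pconj_centr_stab_eq[OF perm_group_G folder_centr[OF L repr_in_R[OF y]] gsel_in_G[OF y] g]) simp

lemma folder_ext_R: "L \<in> folders G R \<Longrightarrow> r \<in> R \<Longrightarrow> folder_ext L r = L r"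
  using folder_ext_eq[of L r id] R_subset_X perm_group_id[OF perm_group_G] repr_R by auto

lemma folder_ext_centr:
  assumes L: "L \<in> folders G R" and y: "y \<in> X"
  shows "folder_ext L y \<in> centr G (stab G y)"
  using pconj_centr_stab[OF _ folder_centr[OF L repr_in_R[OF y]], of "gsel y" X]
    perm_group_subset_normalizer[OF perm_group_G] gsel_in_G[OF y] gsel_repr[OF y]
  by (auto simp: folder_ext_def)

lemma folder_ext_perm_group:
  assumes L: "L \<in> folders G R" and y: "y \<in> X" and g: "g \<in> G"
  shows "folder_ext L (g y) = pconj (folder_ext L y) g"
proof -
  have gy: "g y \<in> X"
    using y perm_group_permutes[OF perm_group_G g] by (simp add: permutes_in_image)
  have bij: "bij (gsel y)" "bij g"
    using perm_group_permutes[OF perm_group_G] gsel_in_G[OF y] g by (auto intro: permutes_bij)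
  have "folder_ext L (g y) = pconj (L (repr G R y)) (g \<circ> gsel y)"
    using folder_ext_eq[OF L gy perm_group_comp[OF perm_group_G gsel_in_G[OF y] g]]
    by (simp add: repr_perm_group[OF y g] gsel_repr[OF y])
  also have "\<dots> = pconj (folder_ext L y) g"
    by (simp add: folder_ext_def pconj_pconj[OF bij])
  finally show ?thesis .
qed

lemma fol_act_apply:
  assumes f: "f \<in> F" and x: "x \<in> R"
  shows "fol_act R gsel L f x = pconj (folder_ext L (inv f x)) f"
proof -
  have "inv f x \<in> X"
    using x R_subset_X normalizer_inv_in_X[OF f] by auto
  then show ?thesis
    using x by (simp add: fol_act_def folder_ext_def Let_def inv_gsel)
qed

lemma folder_ext_fol_act:
  assumes L: "L \<in> folders G R" and f: "f \<in> F" and w: "w \<in> X"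
  shows "folder_ext (fol_act R gsel L f) w = pconj (folder_ext L (inv f w)) f"
proof -
  define x where "x = repr G R w"
  have x: "x \<in> R" and "inv f x \<in> X"
    using repr_in_R[OF w] R_subset_X normalizer_inv_in_X[OF f] by (auto simp: x_def)
  define h where "h = pconj (gsel w) (inv f)"
  have f_perm: "f permutes X"
    using normalizer_permutes[OF f] .
  have h: "h \<in> G"
    using normalizer_pconj[OF perm_groupD(4)[OF perm_group_normalizer f] gsel_in_G[OF w]]
    by (simp add: h_def)
  have h_apply: "h u = inv f (gsel w (f u))" for u
    by (simp add: h_def pconj_apply permutes_inv_inv[OF f_perm])
  have "h (inv f x) = inv f w"
    using gsel_repr[OF w] by (simp add: h_apply permutes_inverses(1)[OF f_perm] x_def)
  moreover have "gsel w \<circ> f = f \<circ> h"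
    by (simp add: fun_eq_iff h_apply permutes_inverses(1)[OF f_perm])
  moreover have bij: "bij f" "bij h" "bij (gsel w)"
    using f_perm perm_group_permutes[OF perm_group_G] h gsel_in_G[OF w] by (auto intro: permutes_bij)
  ultimately have "pconj (pconj (folder_ext L (inv f x)) f) (gsel w) = pconj (folder_ext L (inv f w)) f"
    using folder_ext_perm_group[OF L \<open>inv f x \<in> X\<close> h] by (simp add: pconj_pconj)
  then show ?thesis
    by (simp add: folder_ext_def fol_act_apply[OF f x] x_def[symmetric])
qed

lemma fol_act_extensional: "fol_act R gsel L f \<in> extensional R"
  by (simp add: fol_act_def)

lemma fol_act_closed:
  assumes L: "L \<in> folders G R" and f: "f \<in> F"
  shows "fol_act R gsel L f \<in> folders G R"
proof -
  have "fol_act R gsel L f x \<in> centr G (stab G x)" if x: "x \<in> R" for x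
  proof -
    have "inv f x \<in> X"
      using x R_subset_X normalizer_inv_in_X[OF f] by auto
    then show ?thesis
      using pconj_centr_stab[OF f folder_ext_centr[OF L \<open>inv f x \<in> X\<close>]]
      by (simp add: fol_act_apply[OF f x] permutes_inverses(1)[OF normalizer_permutes[OF f]])
  qed
  then show ?thesis
    using fol_act_extensional by (simp add: folders_def PiE_iff)
qed

lemma fol_act_id:
  assumes L: "L \<in> folders G R" shows "fol_act R gsel L id = L"
proof (rule extensionalityI[OF fol_act_extensional])
  show "L \<in> extensional R"
    using L by (simp add: folders_def PiE_iff)
  show "fol_act R gsel L id x = L x" if "x \<in> R" for x
    using that fol_act_apply[OF perm_groupD(2)[OF perm_group_normalizer]] folder_ext_R[OF L] by simp
qed

lemma fol_act_comp:
  assumes L: "L \<in> folders G R" and f: "f \<in> F" and g: "g \<in> F"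
  shows "fol_act R gsel (fol_act R gsel L f) g = fol_act R gsel L (g \<circ> f)"
proof (rule extensionalityI[OF fol_act_extensional fol_act_extensional])
  fix x assume x: "x \<in> R"
  have bij: "bij f" "bij g"
    using normalizer_permutes f g by (auto intro: permutes_bij)
  have "fol_act R gsel (fol_act R gsel L f) g x = pconj (pconj (folder_ext L (inv f (inv g x))) f) g"
    using x R_subset_X normalizer_inv_in_X[OF g]
    by (simp add: fol_act_apply[OF g x] folder_ext_fol_act[OF L f] subset_iff)
  also have "\<dots> = fol_act R gsel L (g \<circ> f) x"
    using x by (simp add: fol_act_apply perm_groupD(3)[OF perm_group_normalizer f g] pconj_pconj[OF bij]
        o_inv_distrib[OF bij(2,1)])
  finally show "fol_act R gsel (fol_act R gsel L f) g x = fol_act R gsel L (g \<circ> f) x" .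
qed

lemma finite_G: "finite G"
  using finite_subset[of G "{p. p permutes X}"] finite_permutations[OF finite_X]
    perm_group_permutes[OF perm_group_G] by blast

lemma finite_normalizer: "finite F"
  using finite_subset[of F "{p. p permutes X}"] finite_permutations[OF finite_X]
    normalizer_permutes by blast

lemma finite_folders: "finite (folders G R)"
proof (rule finite_subset)
  show "folders G R \<subseteq> (\<Pi>\<^sub>E x\<in>R. G)"
    unfolding folders_def centr_def by (rule PiE_mono) blast
  show "finite (\<Pi>\<^sub>E x\<in>R. G)"
    using finite_subset[OF R_subset_X finite_X] finite_G by (rule finite_PiE)
qed

lemma group_action_fol_act:
  "group_action (perm_monoid F) (folders G R) (\<lambda>f. \<lambda>L\<in>folders G R. fol_act R gsel L f)"
  by (rule group_actionI[OF group_perm_monoid[OF perm_group_normalizer], where act = "\<lambda>f L. fol_act R gsel L f"])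
    (simp_all add: perm_monoid_def fol_act_closed fol_act_id fol_act_comp)

theorem card_fol_orbits:
  "real (card (fol_orbits G R gsel F)) = (\<Sum>f\<in>F. real (card (fixset G R gsel f))) / real (card F)"
proof -
  let ?\<phi> = "\<lambda>f. \<lambda>L\<in>folders G R. fol_act R gsel L f"
  interpret group_action "perm_monoid F" "folders G R" ?\<phi>
    by (rule group_action_fol_act)
  have "card (orbits (perm_monoid F) (folders G R) ?\<phi>) * order (perm_monoid F)
      = (\<Sum>f\<in>carrier (perm_monoid F). card (invariants (folders G R) ?\<phi> f))"
    by (rule burnside) (simp_all add: perm_monoid_def finite_normalizer finite_folders)
  moreover have "orbits (perm_monoid F) (folders G R) ?\<phi> = fol_orbits G R gsel F"
    unfolding orbits_def orbit_def fol_orbits_def by (auto simp: perm_monoid_def)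
  moreover have "invariants (folders G R) ?\<phi> f = fixset G R gsel f" for f
    by (auto simp: invariants_def fixset_def)
  moreover have "order (perm_monoid F) = card F"
    by (simp add: order_def perm_monoid_def)
  moreover have "card F > 0"
    using finite_normalizer perm_groupD(2)[OF perm_group_normalizer] card_gt_0_iff by blast
  ultimately show ?thesis
    by (simp add: perm_monoid_def field_simps flip: of_nat_mult of_nat_sum)
qed

end

section \<open>Fixed folders of one element of the normalizer\<close>

locale rack_folders_map = rack_folders +
  fixes f assumes f_normalizer: "f \<in> normalizer X G"
begin

definition transfer :: "'a \<Rightarrow> ('a \<Rightarrow> 'a) \<Rightarrow> 'a \<Rightarrow> 'a" where
  "transfer z l = pconj (pconj l (gsel (inv f (fbar G R f z)))) f"

lemma fbar_in_R: "z \<in> R \<Longrightarrow> fbar G R f z \<in> R"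
  using R_subset_X by (auto simp: fbar_def intro: repr_in_R normalizer_in_X[OF f_normalizer])

lemma bij_betw_fbar: "bij_betw (fbar G R f) R R"
proof -
  have "R \<subseteq> fbar G R f ` R"
  proof
    fix x assume x: "x \<in> R"
    then have "repr G R (inv f x) \<in> R"
      using R_subset_X by (auto intro: repr_in_R normalizer_inv_in_X[OF f_normalizer])
    then show "x \<in> fbar G R f ` R"
      using repr_inv_eq_iff[OF f_normalizer _ x] by force
  qed
  moreover have "fbar G R f ` R \<subseteq> R"
    using fbar_in_R by blast
  ultimately show ?thesis
    using finite_surj_inj[OF finite_subset[OF R_subset_X finite_X]]
    by (simp add: bij_betw_def subset_antisym)
qed

end

sublocale rack_folders_map \<subseteq> transport R "fbar G R f" "\<lambda>z. centr G (stab G z)" transfer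
  using finite_subset[OF R_subset_X finite_X] bij_betw_fbar by unfold_locales

context rack_folders_map
begin

lemma repr_inv_fbar: "z \<in> R \<Longrightarrow> repr G R (inv f (fbar G R f z)) = z"
  using repr_inv_eq_iff[OF f_normalizer _ fbar_in_R] by blast

lemma fol_act_fbar:
  assumes z: "z \<in> R"
  shows "fol_act R gsel L f (fbar G R f z) = transfer z (L z)"
proof -
  have "inv f (fbar G R f z) \<in> X"
    using fbar_in_R[OF z] R_subset_X normalizer_inv_in_X[OF f_normalizer] by auto
  then show ?thesis
    using fbar_in_R[OF z] by (simp add: fol_act_def transfer_def inv_gsel repr_inv_fbar[OF z])
qed

lemma fixset_eq: "fixset G R gsel f = invariant_sections"
proof -
  have "fol_act R gsel L f = L \<longleftrightarrow> (\<forall>z\<in>R. L (fbar G R f z) = transfer z (L z))"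
    if L: "L \<in> folders G R" for L
  proof -
    have "fol_act R gsel L f = L \<longleftrightarrow> (\<forall>x\<in>R. fol_act R gsel L f x = L x)"
      using L extensionalityI[OF fol_act_extensional[of L f], of L] by (auto simp: folders_def PiE_iff)
    also have "\<dots> \<longleftrightarrow> (\<forall>z\<in>R. fol_act R gsel L f (fbar G R f z) = L (fbar G R f z))"
      using bij_betw_imp_surj_on[OF bij_betw_fbar] by (metis (no_types, lifting) imageE imageI)
    finally show ?thesis
      by (auto simp: fol_act_fbar)
  qed
  then show ?thesis
    by (auto simp: fixset_def invariant_sections_def folders_def)
qed

lemma garcs_eq: "garcs G R gsel f = arcs"
proof -
  have "(let y = inv f x in z = inv (gsel y) y \<and> k = pconj (pconj l (gsel y)) f)
      \<longleftrightarrow> x = fbar G R f z \<and> k = transfer z l" if "z \<in> R" "x \<in> R" for z x l k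
  proof -
    have "inv f x \<in> X"
      using that R_subset_X normalizer_inv_in_X[OF f_normalizer] by auto
    moreover have "z = repr G R (inv f x) \<longleftrightarrow> x = fbar G R f z"
      using repr_inv_eq_iff[OF f_normalizer that] by auto
    ultimately show ?thesis
      by (cases "x = fbar G R f z") (simp_all add: Let_def inv_gsel transfer_def)
  qed
  then show ?thesis
    unfolding garcs_def arcs_def gverts_def by auto
qed

lemma short_cycles_on_eq: "short_cycles_on G R gsel f x = short_cycles_over x"
  by (simp add: short_cycles_on_def short_cycles_over_def garcs_eq fcycle_def base_cycle_def)

lemma cycle_reps_iff: "cycle_reps G R f C \<longleftrightarrow> C \<subseteq> R \<and> (\<forall>w\<in>R. \<exists>!c. c \<in> C \<and> w \<in> base_cycle c)"
  by (simp add: cycle_reps_def fcycle_def base_cycle_def)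

theorem bij_betw_fixset_short_cycles:
  assumes "cycle_reps G R f C"
  shows "bij_betw (\<lambda>L. \<lambda>c\<in>C. section_cycle L c) (fixset G R gsel f) (\<Pi>\<^sub>E x\<in>C. short_cycles_on G R gsel f x)"
  using bij_betw_invariant_sections assms by (simp add: fixset_eq short_cycles_on_eq cycle_reps_iff)

lemma card_fixset:
  assumes C: "cycle_reps G R f C"
  shows "card (fixset G R gsel f) = (\<Prod>x\<in>C. gamma_r G R gsel f x)"
proof -
  have "finite C"
    using C finite_subset[OF R_subset_X finite_X] by (auto simp: cycle_reps_def intro: finite_subset)
  then show ?thesis
    using bij_betw_same_card[OF bij_betw_fixset_short_cycles[OF C]] by (simp add: card_PiE gamma_r_def)
qed

end

theorem theorem5p4:
  fixes X :: "'a set" and G :: "('a \<Rightarrow> 'a) set" and R :: "'a set"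
    and gsel :: "'a \<Rightarrow> ('a \<Rightarrow> 'a)" and Cyc :: "('a \<Rightarrow> 'a) \<Rightarrow> 'a set"
  assumes "finite X"
    and "perm_group X G"
    and "orbit_reps X G R"
    and "\<forall>y\<in>X. gsel y \<in> G \<and> gsel y (repr G R y) = y"
    and "\<forall>f\<in>normalizer X G. cycle_reps G R f (Cyc f)"
  shows "(\<forall>f\<in>normalizer X G. \<forall>C. cycle_reps G R f C \<longrightarrow>
            (\<exists>\<phi>. bij_betw \<phi> (fixset G R gsel f)
                   (\<Pi>\<^sub>E x\<in>C. short_cycles_on G R gsel f x)))
       \<and> real (card (fol_orbits G R gsel (normalizer X G)))
           = (\<Sum>f\<in>normalizer X G. real (card (fixset G R gsel f))) / real (card (normalizer X G))
       \<and> real (card (fol_orbits G R gsel (normalizer X G)))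
           = (\<Sum>f\<in>normalizer X G. real (\<Prod>x\<in>Cyc f. gamma_r G R gsel f x))
               / real (card (normalizer X G))"
proof -
  interpret rack_folders X G R gsel
    using assms(1-4) by unfold_locales
  have map: "rack_folders_map X G R gsel f" if "f \<in> F" for f
    using that by (simp add: rack_folders_map_def rack_folders_map_axioms_def rack_folders_axioms)
  have "(\<Sum>f\<in>F. real (card (fixset G R gsel f))) = (\<Sum>f\<in>F. real (\<Prod>x\<in>Cyc f. gamma_r G R gsel f x))"
    using rack_folders_map.card_fixset[OF map] assms(5) by (intro sum.cong) auto
  then show ?thesis
    using rack_folders_map.bij_betw_fixset_short_cycles[OF map] card_fol_orbits by auto
qed

end
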